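(* Let $K\subset\mathbb R^2$ be a nondegenerate triangle with vertices $a_1,a_2,a_3$, area $|K|$, edge lengths $e_1,e_2,e_3$ (with $e_i$ the length of the edge opposite $a_i$), and edge midpoints $m_k=(a_i+a_j)/2$ for $\{i,j,k\}=\{1,2,3\}$. Let $v:K\to\mathbb R$ be continuous, affine on each of the four subtriangles with vertex sets $\{a_1,m_3,m_2\}$, $\{m_3,a_2,m_1\}$, $\{m_2,m_1,a_3\}$, $\{m_1,m_2,m_3\}$, and satisfy $v(a_1)=v(a_2)=v(a_3)=0$. Then $$\int_K|\nabla v|^2\,dx\le\frac{1}{|K|}\Big(\sum_{i=1}^3e_i^2\Big)\sum_{i=1}^3 v(m_i)^2 .$$ *)

theory Defs
  imports "HOL-Analysis.Analysis"
begin

text \<open>At points of non-differentiability (a null set for the piecewise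
  affine functions considered) the value is unspecified, which does not affect integrals.\<close>
definition grad :: "(real^2 \<Rightarrow> real) \<Rightarrow> real^2 \<Rightarrow> real^2" where
  "grad f x = (SOME g. (f has_derivative (\<lambda>h. g \<bullet> h)) (at x))"

definition affine_on_set :: "(real^2 \<Rightarrow> real) \<Rightarrow> (real^2) set \<Rightarrow> bool" where
  "affine_on_set f S \<longleftrightarrow> (\<exists>g c. \<forall>x\<in>S. f x = g \<bullet> x + c)"

end

theory Submission
  imports Defs
begin

text \<open>On each of the four subtriangles \<open>v\<close> has a constant gradient \<open>g\<^sub>k\<close>, and each subtriangle has
  area \<open>|K|/4\<close>, so the energy is \<open>|K|/4 \<cdot> \<Sum> |g\<^sub>k|\<^sup>2\<close>. Since \<open>v\<close> vanishes at the vertices, the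
  inner products of \<open>g\<^sub>k\<close> with the edge vectors \<open>p = a\<^sub>2 - a\<^sub>1\<close>, \<open>q = a\<^sub>3 - a\<^sub>1\<close> are explicit
  linear combinations of the midpoint values \<open>x\<^sub>i = v(m\<^sub>i)\<close>. A plane vector is recovered from
  these two inner products via \<open>det(p,q)\<^sup>2 |g|\<^sup>2 = |(g\<cdot>p) q - (g\<cdot>q) p|\<^sup>2\<close>, and
  \<open>det(p,q)\<^sup>2 = 4|K|\<^sup>2\<close>. The claim thus reduces to a quadratic inequality in \<open>|p|\<^sup>2, |q|\<^sup>2,
  |p - q|\<^sup>2\<close> and the \<open>x\<^sub>i\<close>, which holds because the difference of both sides is a combination
  of these three squared edge lengths with nonnegative coefficients.\<close>

definition det2 :: "real^2 \<Rightarrow> real^2 \<Rightarrow> real" where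
  "det2 p q = p$1 * q$2 - p$2 * q$1"

lemma measure_lebesgue_triangle:
  fixes a b c :: "real^2"
  shows "measure lebesgue (convex hull {a, b, c}) = \<bar>det2 (b - a) (c - a)\<bar> / 2"
proof -
  have "closed (convex hull {a, b, c})"
    by (simp add: compact_imp_closed finite_imp_compact_convex_hull)
  then have "measure lebesgue (convex hull {a, b, c})
      = Henstock_Kurzweil_Integration.content (convex hull {a, b, c})"
    by (intro measure_completion) simp
  also have "\<dots> = \<bar>det2 (b - a) (c - a)\<bar> / 2"
    unfolding content_triangle det2_def by (simp add: abs_minus_commute algebra_simps)
  finally show ?thesis .
qed

lemma norm_sq_scaleR_diff:
  fixes p q :: "'a::real_inner"
  shows "(norm (s *\<^sub>R q - t *\<^sub>R p))\<^sup>2 = s\<^sup>2 * (norm q)\<^sup>2 - 2 * s * t * (p \<bullet> q) + t\<^sup>2 * (norm p)\<^sup>2"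
  unfolding power2_norm_eq_inner
  by (simp add: inner_diff_left inner_diff_right inner_commute power2_eq_square algebra_simps)

lemma inner_eq_norm_sq_diff:
  fixes p q :: "'a::real_inner"
  shows "p \<bullet> q = ((norm p)\<^sup>2 + (norm q)\<^sup>2 - (norm (p - q))\<^sup>2) / 2"
  unfolding power2_norm_eq_inner by (simp add: inner_diff_left inner_diff_right inner_commute)

lemma det2_sq_mult_norm_sq:
  fixes p q g :: "real^2"
  shows "(det2 p q)\<^sup>2 * (norm g)\<^sup>2 = (norm ((g \<bullet> p) *\<^sub>R q - (g \<bullet> q) *\<^sub>R p))\<^sup>2"
  unfolding norm_sq_scaleR_diff unfolding power2_norm_eq_inner det2_def
  by (simp add: inner_vec_def sum_2) algebra

lemma midpoint_subdivision_norm_sq_bound: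
  fixes p q :: "'a::real_inner" and x1 x2 x3 :: real
  shows "(norm ((2*x3) *\<^sub>R q - (2*x2) *\<^sub>R p))\<^sup>2 + (norm ((-2*x3) *\<^sub>R q - (2*x1 - 2*x3) *\<^sub>R p))\<^sup>2
       + (norm ((2*x1 - 2*x2) *\<^sub>R q - (-2*x2) *\<^sub>R p))\<^sup>2
       + (norm ((2*x1 - 2*x2) *\<^sub>R q - (2*x1 - 2*x3) *\<^sub>R p))\<^sup>2
     \<le> 16 * ((norm (p - q))\<^sup>2 + (norm q)\<^sup>2 + (norm p)\<^sup>2) * (x1\<^sup>2 + x2\<^sup>2 + x3\<^sup>2)"
    (is "?L \<le> _")
proof -
  define P Q M X where "P = (norm p)\<^sup>2" and "Q = (norm q)\<^sup>2" and "M = (norm (p - q))\<^sup>2"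
    and "X = x1\<^sup>2 + x2\<^sup>2 + x3\<^sup>2"
  define y where "y = x1 - x2 - x3"
  have "y\<^sup>2 \<le> 4 * X"
    unfolding X_def y_def by (smt (verit) sum_squares_ge_zero power2_diff power2_sum zero_le_power2)
  then have "0 \<le> (2*(x1+x3)\<^sup>2 + 2*x2\<^sup>2 + y\<^sup>2) * P + (2*(x1+x2)\<^sup>2 + 2*x3\<^sup>2 + y\<^sup>2) * Q + (4*X - y\<^sup>2) * M"
    unfolding P_def Q_def M_def by (intro add_nonneg_nonneg mult_nonneg_nonneg) auto
  moreover have "16 * (M + Q + P) * X - ?L
     = 4 * ((2*(x1+x3)\<^sup>2 + 2*x2\<^sup>2 + y\<^sup>2) * P + (2*(x1+x2)\<^sup>2 + 2*x3\<^sup>2 + y\<^sup>2) * Q + (4*X - y\<^sup>2) * M)"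
    unfolding norm_sq_scaleR_diff inner_eq_norm_sq_diff[of p q]
      P_def[symmetric] Q_def[symmetric] M_def[symmetric]
    unfolding X_def y_def by (simp add: power2_eq_square field_simps)
  ultimately show ?thesis
    unfolding P_def Q_def M_def X_def by argo
qed

lemma in_convex_hull_3I:
  assumes "0 \<le> u" "0 \<le> v" "0 \<le> w" "u + v + w = 1" "x = u *\<^sub>R a + v *\<^sub>R b + w *\<^sub>R c"
  shows "x \<in> convex hull {a, b, c}"
  unfolding convex_hull_3 using assms by blast

lemma midpoints_in_convex_hull_3:
  fixes a b c :: "'a::real_vector"
  shows "midpoint a b \<in> convex hull {a, b, c}" "midpoint a c \<in> convex hull {a, b, c}"
    "midpoint b c \<in> convex hull {a, b, c}"
  by (rule in_convex_hull_3I[of "1/2" "1/2" 0]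
      in_convex_hull_3I[of "1/2" 0 "1/2"]
      in_convex_hull_3I[of 0 "1/2" "1/2"];
      simp add: midpoint_def scaleR_add_right)+

lemma convex_hull_3_subset_midpoint_subdivision:
  fixes a1 a2 a3 :: "'a::euclidean_space"
  shows "convex hull {a1, a2, a3} \<subseteq> convex hull {a1, midpoint a1 a2, midpoint a1 a3}
     \<union> convex hull {midpoint a1 a2, a2, midpoint a2 a3} \<union> convex hull {midpoint a1 a3, midpoint a2 a3, a3}
     \<union> convex hull {midpoint a2 a3, midpoint a1 a3, midpoint a1 a2}"
proof
  fix x assume "x \<in> convex hull {a1, a2, a3}"
  then obtain u v w where uvw: "0 \<le> u" "0 \<le> v" "0 \<le> w" "u + v + w = 1"
    and x: "x = u *\<^sub>R a1 + v *\<^sub>R a2 + w *\<^sub>R a3"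
    unfolding convex_hull_3 by blast
  have u: "u = 1 - v - w" using uvw by simp
  \<comment> \<open>the barycentric coordinate that is at least \<open>1/2\<close> (if any) locates the corner triangle\<close>
  consider "u \<ge> 1/2" | "v \<ge> 1/2" | "w \<ge> 1/2" | "u < 1/2" "v < 1/2" "w < 1/2" by linarith
  then show "x \<in> convex hull {a1, midpoint a1 a2, midpoint a1 a3}
     \<union> convex hull {midpoint a1 a2, a2, midpoint a2 a3} \<union> convex hull {midpoint a1 a3, midpoint a2 a3, a3}
     \<union> convex hull {midpoint a2 a3, midpoint a1 a3, midpoint a1 a2}"
  proof cases
    case 1
    have "x \<in> convex hull {a1, midpoint a1 a2, midpoint a1 a3}"
      using uvw 1 by (intro in_convex_hull_3I[of "2 * u - 1" "2 * v" "2 * w"])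
        (auto simp: x u midpoint_def euclidean_eq_iff[where 'a='a] inner_simps algebra_simps)
    then show ?thesis by blast
  next
    case 2
    have "x \<in> convex hull {midpoint a1 a2, a2, midpoint a2 a3}"
      using uvw 2 by (intro in_convex_hull_3I[of "2 * u" "2 * v - 1" "2 * w"])
        (auto simp: x u midpoint_def euclidean_eq_iff[where 'a='a] inner_simps algebra_simps)
    then show ?thesis by blast
  next
    case 3
    have "x \<in> convex hull {midpoint a1 a3, midpoint a2 a3, a3}"
      using uvw 3 by (intro in_convex_hull_3I[of "2 * u" "2 * v" "2 * w - 1"])
        (auto simp: x u midpoint_def euclidean_eq_iff[where 'a='a] inner_simps algebra_simps)
    then show ?thesis by blast
  next
    case 4
    have "x \<in> convex hull {midpoint a2 a3, midpoint a1 a3, midpoint a1 a2}"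
      using uvw 4 by (intro in_convex_hull_3I[of "1 - 2 * u" "1 - 2 * v" "1 - 2 * w"])
        (auto simp: x u midpoint_def euclidean_eq_iff[where 'a='a] inner_simps algebra_simps)
    then show ?thesis by blast
  qed
qed

lemma grad_eq_on_interior:
  assumes affine: "\<forall>y\<in>T. v y = g \<bullet> y + c" and x: "x \<in> interior T"
  shows "grad v x = g"
proof -
  have "((\<lambda>y. g \<bullet> y + c) has_derivative (\<lambda>h. g \<bullet> h)) (at x)"
    by (intro has_derivative_add_const bounded_linear_imp_has_derivative bounded_linear_inner_right)
  then have deriv: "(v has_derivative (\<lambda>h. g \<bullet> h)) (at x)"
    by (rule has_derivative_transform_within_open[OF _ open_interior x])
      (metis affine interior_subset subsetD)
  then have "(v has_derivative (\<lambda>h. grad v x \<bullet> h)) (at x)"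
    unfolding grad_def by (rule someI)
  then have "(\<lambda>h. grad v x \<bullet> h) = (\<lambda>h. g \<bullet> h)"
    using deriv by (rule has_derivative_unique)
  then have "(grad v x - g) \<bullet> (grad v x - g) = 0"
    by (metis inner_diff_left inner_diff_right diff_self)
  then show ?thesis by simp
qed

lemma has_integral_const_on_subset:
  assumes "T \<subseteq> K" "T \<in> lmeasurable"
  shows "((\<lambda>x. if x \<in> T then c else 0) has_integral (c * measure lebesgue T)) K"
proof -
  have "((\<lambda>x. 1::real) has_integral measure lebesgue T) T"
    unfolding lmeasure_integral[OF assms(2)]
    using integrable_on_const[OF assms(2)] by (rule integrable_integral)
  then have "((\<lambda>x. c) has_integral (c * measure lebesgue T)) (T \<inter> K)"
    using has_integral_mult_right[of "\<lambda>x. 1::real"] assms(1) by (simp add: Int_absorb2)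
  then show ?thesis by (subst has_integral_restrict_Int)
qed

lemma integral_le_sum_list_convex_cover:
  fixes f :: "'a::euclidean_space \<Rightarrow> real" and ps :: "('a set \<times> real) list"
  assumes pieces: "\<And>T c. (T, c) \<in> set ps \<Longrightarrow>
      convex T \<and> compact T \<and> T \<subseteq> K \<and> 0 \<le> c \<and> (\<forall>x\<in>interior T. f x \<le> c)"
    and cover: "K \<subseteq> (\<Union>(T, c)\<in>set ps. T)"
  shows "integral K f \<le> (\<Sum>(T, c)\<leftarrow>ps. c * measure lebesgue T)"
proof -
  define h where "h x = (\<Sum>(T, c)\<leftarrow>ps. if x \<in> T then c else 0)" for x
  define N where "N = (\<Union>(T, c)\<in>set ps. frontier T)"
  have h_nonneg: "0 \<le> h x" for x
    unfolding h_def using pieces by (intro sum_list_nonneg) auto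
  have "((\<lambda>x. \<Sum>(T, c)\<leftarrow>qs. if x \<in> T then c else 0)
      has_integral (\<Sum>(T, c)\<leftarrow>qs. c * measure lebesgue T)) K"
    if "set qs \<subseteq> set ps" for qs
    using that
    by (induction qs) (auto intro!: has_integral_add has_integral_const_on_subset lmeasurable_compact
        dest: pieces)
  then have h_int: "(h has_integral (\<Sum>(T, c)\<leftarrow>ps. c * measure lebesgue T)) K"
    unfolding h_def by blast
  have "negligible N"
    unfolding N_def using pieces
    by (intro negligible_Union) (auto intro: negligible_convex_frontier)
  have f_le_h: "f x \<le> h x" if x: "x \<in> K - N" for x
  proof -
    obtain T c where Tc: "(T, c) \<in> set ps" "x \<in> T" "x \<notin> frontier T"
      using x cover unfolding N_def by blast
    then have "x \<in> interior T"
      using pieces[OF Tc(1)] by (simp add: frontier_def compact_imp_closed)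
    then have "f x \<le> c" using pieces[OF Tc(1)] by blast
    also have "c \<le> h x"
      unfolding h_def using pieces Tc
      by (intro member_le_sum_list) (auto intro!: image_eqI[where x="(T, c)"])
    finally show ?thesis .
  qed
  show ?thesis
  proof (cases "f integrable_on K")
    case True
    define f' where "f' x = (if x \<in> N then 0 else f x)" for x
    have "integral K f = integral K f'"
      by (rule integral_spike[OF \<open>negligible N\<close>]) (auto simp: f'_def)
    also have "\<dots> \<le> integral K h"
      using integrable_spike[OF True \<open>negligible N\<close>, of f'] h_int f_le_h h_nonneg
      by (intro integral_le) (auto simp: f'_def)
    also have "\<dots> = (\<Sum>(T, c)\<leftarrow>ps. c * measure lebesgue T)"
      using h_int by (rule integral_unique)
    finally show ?thesis .
  next
    case False
    then show ?thesis
      using pieces by (simp add: not_integrable_integral) (intro sum_list_nonneg; auto)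
  qed
qed

lemma integral_sq_grad_le_midpoint_subdivision:
  fixes a1 a2 a3 g1 g2 g3 g4 :: "real^2"
  assumes "\<forall>x\<in>convex hull {a1, midpoint a1 a2, midpoint a1 a3}. v x = g1 \<bullet> x + c1"
    and "\<forall>x\<in>convex hull {midpoint a1 a2, a2, midpoint a2 a3}. v x = g2 \<bullet> x + c2"
    and "\<forall>x\<in>convex hull {midpoint a1 a3, midpoint a2 a3, a3}. v x = g3 \<bullet> x + c3"
    and "\<forall>x\<in>convex hull {midpoint a2 a3, midpoint a1 a3, midpoint a1 a2}. v x = g4 \<bullet> x + c4"
  shows "integral (convex hull {a1, a2, a3}) (\<lambda>x. (norm (grad v x))\<^sup>2)
    \<le> measure lebesgue (convex hull {a1, a2, a3}) / 4
       * ((norm g1)\<^sup>2 + (norm g2)\<^sup>2 + (norm g3)\<^sup>2 + (norm g4)\<^sup>2)"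
proof -
  define K where "K = convex hull {a1, a2, a3}"
  define T1 where "T1 = convex hull {a1, midpoint a1 a2, midpoint a1 a3}"
  define T2 where "T2 = convex hull {midpoint a1 a2, a2, midpoint a2 a3}"
  define T3 where "T3 = convex hull {midpoint a1 a3, midpoint a2 a3, a3}"
  define T4 where "T4 = convex hull {midpoint a2 a3, midpoint a1 a3, midpoint a1 a2}"
  have vertices: "a1 \<in> K" "a2 \<in> K" "a3 \<in> K"
      "midpoint a1 a2 \<in> K" "midpoint a1 a3 \<in> K" "midpoint a2 a3 \<in> K"
    unfolding K_def by (simp_all add: hull_inc midpoints_in_convex_hull_3)
  have piece: "convex T \<and> compact T \<and> T \<subseteq> K \<and> 0 \<le> (norm g)\<^sup>2
      \<and> (\<forall>x\<in>interior T. (norm (grad v x))\<^sup>2 \<le> (norm g)\<^sup>2)"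
    if "T = convex hull {b1, b2, b3}" "{b1, b2, b3} \<subseteq> K" "\<forall>x\<in>T. v x = g \<bullet> x + c"
    for T b1 b2 b3 g c
    using that grad_eq_on_interior[OF that(3)]
    by (auto simp: K_def finite_imp_compact_convex_hull convex_hull_subset)
  have quarter: "measure lebesgue (convex hull {b1, b2, b3}) = measure lebesgue K / 4"
    if "det2 (b2 - b1) (b3 - b1) = det2 (a2 - a1) (a3 - a1) / 4" for b1 b2 b3
    using that by (simp add: K_def measure_lebesgue_triangle)
  have areas: "measure lebesgue T1 = measure lebesgue K / 4" "measure lebesgue T2 = measure lebesgue K / 4"
    "measure lebesgue T3 = measure lebesgue K / 4" "measure lebesgue T4 = measure lebesgue K / 4"
    unfolding T1_def T2_def T3_def T4_def
    by (rule quarter; simp add: det2_def midpoint_def field_simps)+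
  define ps where "ps = [(T1, (norm g1)\<^sup>2), (T2, (norm g2)\<^sup>2), (T3, (norm g3)\<^sup>2), (T4, (norm g4)\<^sup>2)]"
  have "integral K (\<lambda>x. (norm (grad v x))\<^sup>2) \<le> (\<Sum>(T, c)\<leftarrow>ps. c * measure lebesgue T)"
  proof (rule integral_le_sum_list_convex_cover)
    show "K \<subseteq> (\<Union>(T, c)\<in>set ps. T)"
      using convex_hull_3_subset_midpoint_subdivision[of a1 a2 a3]
      by (simp add: ps_def K_def T1_def T2_def T3_def T4_def Un_assoc)
  qed (use vertices assms in \<open>auto simp: ps_def T1_def T2_def T3_def T4_def
        intro!: piece[OF refl] simp del: norm_le_zero_iff\<close>)
  also have "(\<Sum>(T, c)\<leftarrow>ps. c * measure lebesgue T)
      = measure lebesgue K / 4 * ((norm g1)\<^sup>2 + (norm g2)\<^sup>2 + (norm g3)\<^sup>2 + (norm g4)\<^sup>2)"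
    by (simp add: ps_def areas algebra_simps)
  finally show ?thesis unfolding K_def .
qed

lemma midpoint_subdivision_gradient_inner_edges:
  fixes a1 a2 a3 g1 g2 g3 g4 :: "'a::real_inner"
  assumes A1: "\<forall>x\<in>convex hull {a1, midpoint a1 a2, midpoint a1 a3}. v x = g1 \<bullet> x + c1"
    and A2: "\<forall>x\<in>convex hull {midpoint a1 a2, a2, midpoint a2 a3}. v x = g2 \<bullet> x + c2"
    and A3: "\<forall>x\<in>convex hull {midpoint a1 a3, midpoint a2 a3, a3}. v x = g3 \<bullet> x + c3"
    and A4: "\<forall>x\<in>convex hull {midpoint a2 a3, midpoint a1 a3, midpoint a1 a2}. v x = g4 \<bullet> x + c4"
    and v0: "v a1 = 0" "v a2 = 0" "v a3 = 0"
  shows "g1 \<bullet> (a2 - a1) = 2 * v (midpoint a1 a2)" "g1 \<bullet> (a3 - a1) = 2 * v (midpoint a1 a3)"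
    "g2 \<bullet> (a2 - a1) = -2 * v (midpoint a1 a2)"
    "g2 \<bullet> (a3 - a1) = 2 * v (midpoint a2 a3) - 2 * v (midpoint a1 a2)"
    "g3 \<bullet> (a2 - a1) = 2 * v (midpoint a2 a3) - 2 * v (midpoint a1 a3)"
    "g3 \<bullet> (a3 - a1) = -2 * v (midpoint a1 a3)"
    "g4 \<bullet> (a2 - a1) = 2 * v (midpoint a2 a3) - 2 * v (midpoint a1 a3)"
    "g4 \<bullet> (a3 - a1) = 2 * v (midpoint a2 a3) - 2 * v (midpoint a1 a2)"
proof -
  have slope: "g \<bullet> (y - x) = v y - v x"
    if "\<forall>z\<in>convex hull S. v z = g \<bullet> z + c" "x \<in> S" "y \<in> S" for g c x y and S :: "'a set"
    using that by (simp add: hull_inc inner_diff_right)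
  have edges: "a2 - a1 = 2 *\<^sub>R (midpoint a1 a2 - a1)" "a2 - a1 = 2 *\<^sub>R (a2 - midpoint a1 a2)"
    "a2 - a1 = 2 *\<^sub>R (midpoint a2 a3 - midpoint a1 a3)"
    "a3 - a1 = 2 *\<^sub>R (midpoint a1 a3 - a1)" "a3 - a1 = 2 *\<^sub>R (midpoint a2 a3 - midpoint a1 a2)"
    "a3 - a1 = 2 *\<^sub>R (a3 - midpoint a1 a3)"
    by (simp_all add: midpoint_def algebra_simps scaleR_2)
  show "g1 \<bullet> (a2 - a1) = 2 * v (midpoint a1 a2)"
    unfolding edges(1) using slope[OF A1, of a1 "midpoint a1 a2"] v0 by simp
  show "g1 \<bullet> (a3 - a1) = 2 * v (midpoint a1 a3)"
    unfolding edges(4) using slope[OF A1, of a1 "midpoint a1 a3"] v0 by simp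
  show "g2 \<bullet> (a2 - a1) = -2 * v (midpoint a1 a2)"
    unfolding edges(2) using slope[OF A2, of "midpoint a1 a2" a2] v0 by simp
  show "g2 \<bullet> (a3 - a1) = 2 * v (midpoint a2 a3) - 2 * v (midpoint a1 a2)"
    unfolding edges(5) using slope[OF A2, of "midpoint a1 a2" "midpoint a2 a3"] by simp
  show "g3 \<bullet> (a2 - a1) = 2 * v (midpoint a2 a3) - 2 * v (midpoint a1 a3)"
    unfolding edges(3) using slope[OF A3, of "midpoint a1 a3" "midpoint a2 a3"] by simp
  show "g3 \<bullet> (a3 - a1) = -2 * v (midpoint a1 a3)"
    unfolding edges(6) using slope[OF A3, of "midpoint a1 a3" a3] v0 by simp
  show "g4 \<bullet> (a2 - a1) = 2 * v (midpoint a2 a3) - 2 * v (midpoint a1 a3)"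
    unfolding edges(3) using slope[OF A4, of "midpoint a1 a3" "midpoint a2 a3"] by simp
  show "g4 \<bullet> (a3 - a1) = 2 * v (midpoint a2 a3) - 2 * v (midpoint a1 a2)"
    unfolding edges(5) using slope[OF A4, of "midpoint a1 a2" "midpoint a2 a3"] by simp
qed

lemma quarter_area_sum_sq_norm_le:
  fixes a1 a2 a3 g1 g2 g3 g4 :: "real^2" and x1 x2 x3 :: real
  assumes "g1 \<bullet> (a2 - a1) = 2 * x3" "g1 \<bullet> (a3 - a1) = 2 * x2"
    "g2 \<bullet> (a2 - a1) = -2 * x3" "g2 \<bullet> (a3 - a1) = 2 * x1 - 2 * x3"
    "g3 \<bullet> (a2 - a1) = 2 * x1 - 2 * x2" "g3 \<bullet> (a3 - a1) = -2 * x2"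
    "g4 \<bullet> (a2 - a1) = 2 * x1 - 2 * x2" "g4 \<bullet> (a3 - a1) = 2 * x1 - 2 * x3"
  shows "measure lebesgue (convex hull {a1, a2, a3}) / 4
       * ((norm g1)\<^sup>2 + (norm g2)\<^sup>2 + (norm g3)\<^sup>2 + (norm g4)\<^sup>2)
    \<le> 1 / measure lebesgue (convex hull {a1, a2, a3})
       * ((dist a2 a3)\<^sup>2 + (dist a1 a3)\<^sup>2 + (dist a1 a2)\<^sup>2) * (x1\<^sup>2 + x2\<^sup>2 + x3\<^sup>2)"
proof -
  define p q where "p = a2 - a1" and "q = a3 - a1"
  define A S E X where "A = measure lebesgue (convex hull {a1, a2, a3})"
    and "S = (norm g1)\<^sup>2 + (norm g2)\<^sup>2 + (norm g3)\<^sup>2 + (norm g4)\<^sup>2"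
    and "E = (dist a2 a3)\<^sup>2 + (dist a1 a3)\<^sup>2 + (dist a1 a2)\<^sup>2"
    and "X = x1\<^sup>2 + x2\<^sup>2 + x3\<^sup>2"
  have E: "E = (norm (p - q))\<^sup>2 + (norm q)\<^sup>2 + (norm p)\<^sup>2"
    unfolding E_def p_def q_def by (simp add: dist_norm norm_minus_commute)
  have "(det2 p q)\<^sup>2 * S
      = (norm ((2*x3) *\<^sub>R q - (2*x2) *\<^sub>R p))\<^sup>2 + (norm ((-2*x3) *\<^sub>R q - (2*x1 - 2*x3) *\<^sub>R p))\<^sup>2
       + (norm ((2*x1 - 2*x2) *\<^sub>R q - (-2*x2) *\<^sub>R p))\<^sup>2
       + (norm ((2*x1 - 2*x2) *\<^sub>R q - (2*x1 - 2*x3) *\<^sub>R p))\<^sup>2"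
    unfolding S_def distrib_left det2_sq_mult_norm_sq p_def q_def assms ..
  also have "\<dots> \<le> 16 * E * X"
    unfolding E X_def by (rule midpoint_subdivision_norm_sq_bound)
  finally have "A\<^sup>2 * S \<le> 4 * E * X"
    by (simp add: A_def measure_lebesgue_triangle p_def q_def power_divide)
  moreover have "0 \<le> A" "0 \<le> S"
    by (simp_all add: A_def S_def)
  ultimately have "A / 4 * S \<le> 1 / A * E * X"
    by (cases "A = 0") (auto simp: field_simps power2_eq_square)
  then show ?thesis unfolding A_def S_def E_def X_def .
qed

theorem mainTheorem6:
  fixes a1 a2 a3 :: "real^2" and v :: "real^2 \<Rightarrow> real"
  assumes nondeg: "\<not> collinear {a1, a2, a3}"
    and cont: "continuous_on (convex hull {a1, a2, a3}) v"
    and aff1: "affine_on_set v (convex hull {a1, midpoint a1 a2, midpoint a1 a3})"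
    and aff2: "affine_on_set v (convex hull {midpoint a1 a2, a2, midpoint a2 a3})"
    and aff3: "affine_on_set v (convex hull {midpoint a1 a3, midpoint a2 a3, a3})"
    and aff4: "affine_on_set v (convex hull {midpoint a2 a3, midpoint a1 a3, midpoint a1 a2})"
    and v0: "v a1 = 0" "v a2 = 0" "v a3 = 0"
  shows "integral (convex hull {a1, a2, a3}) (\<lambda>x. (norm (grad v x))\<^sup>2)
    \<le> (1 / measure lebesgue (convex hull {a1, a2, a3}))
       * ((dist a2 a3)\<^sup>2 + (dist a1 a3)\<^sup>2 + (dist a1 a2)\<^sup>2)
       * ((v (midpoint a2 a3))\<^sup>2 + (v (midpoint a1 a3))\<^sup>2 + (v (midpoint a1 a2))\<^sup>2)"
proof -
  obtain g1 c1 where A1: "\<forall>x\<in>convex hull {a1, midpoint a1 a2, midpoint a1 a3}. v x = g1 \<bullet> x + c1"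
    using aff1 unfolding affine_on_set_def by blast
  obtain g2 c2 where A2: "\<forall>x\<in>convex hull {midpoint a1 a2, a2, midpoint a2 a3}. v x = g2 \<bullet> x + c2"
    using aff2 unfolding affine_on_set_def by blast
  obtain g3 c3 where A3: "\<forall>x\<in>convex hull {midpoint a1 a3, midpoint a2 a3, a3}. v x = g3 \<bullet> x + c3"
    using aff3 unfolding affine_on_set_def by blast
  obtain g4 c4 where A4: "\<forall>x\<in>convex hull {midpoint a2 a3, midpoint a1 a3, midpoint a1 a2}. v x = g4 \<bullet> x + c4"
    using aff4 unfolding affine_on_set_def by blast
  have "integral (convex hull {a1, a2, a3}) (\<lambda>x. (norm (grad v x))\<^sup>2)
      \<le> measure lebesgue (convex hull {a1, a2, a3}) / 4
         * ((norm g1)\<^sup>2 + (norm g2)\<^sup>2 + (norm g3)\<^sup>2 + (norm g4)\<^sup>2)"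
    by (rule integral_sq_grad_le_midpoint_subdivision[OF A1 A2 A3 A4])
  also have "\<dots> \<le> (1 / measure lebesgue (convex hull {a1, a2, a3}))
       * ((dist a2 a3)\<^sup>2 + (dist a1 a3)\<^sup>2 + (dist a1 a2)\<^sup>2)
       * ((v (midpoint a2 a3))\<^sup>2 + (v (midpoint a1 a3))\<^sup>2 + (v (midpoint a1 a2))\<^sup>2)"
    using midpoint_subdivision_gradient_inner_edges[OF A1 A2 A3 A4 v0]
    by (intro quarter_area_sum_sq_norm_le) simp_all
  finally show ?thesis .
qed

end
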